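(* Let $d\ge 3$. For every positive integer $n$ there is a convex lattice polytope $\mathcal{P}\subseteq\mathbb{R}^d$ (all vertices in $\mathbb{Z}^d$) with at least $n$ vertices such that every point of $\mathcal{P}\cap\mathbb{Z}^d$ lies in a vertex, an edge, or a two-dimensional face of $\mathcal{P}$. *)

theory Defs
  imports "HOL-Analysis.Analysis"
begin

definition lattice_point :: "real^'d \<Rightarrow> bool" where
  "lattice_point x \<longleftrightarrow> (\<forall>i. x $ i \<in> \<int>)"

end

theory Submission
  imports Defs
begin

(* Take the prism over the convex N-gon with vertices (k, k^2), k < N, in two coordinate
   directions a and b, with the unit cube in the remaining coordinates.  The prism lies above the
   parabola y_b = y_a^2, so on the slice where the other coordinates equal f the generator
   (k, k^2, f) is the unique minimiser of the tangent functional y_b - 2 k y_a; hence all N 2^(d-2)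
   generators are vertices.  A lattice point of the prism has its remaining coordinates in {0, 1},
   and fixing them cuts out a face that is a copy of the polygon, of dimension at most two. *)

definition parabola_prism :: "'n::finite \<Rightarrow> 'n \<Rightarrow> nat \<Rightarrow> (real^'n) set" where
  "parabola_prism a b N =
     {x. (\<exists>k<N. x $ a = real k \<and> x $ b = (real k)\<^sup>2) \<and> (\<forall>i. i \<notin> {a, b} \<longrightarrow> x $ i \<in> {0, 1})}"

lemma finite_vectors_with_coordinates_in:
  assumes "finite T"
  shows "finite {x::'a^'n. \<forall>i. x $ i \<in> T}"
proof -
  have "{x::'a^'n. \<forall>i. x $ i \<in> T} \<subseteq> vec_lambda ` (UNIV \<rightarrow>\<^sub>E T)"
  proof
    fix x :: "'a^'n" assume "x \<in> {x. \<forall>i. x $ i \<in> T}"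
    then have "vec_nth x \<in> UNIV \<rightarrow>\<^sub>E T" by auto
    then show "x \<in> vec_lambda ` (UNIV \<rightarrow>\<^sub>E T)" by (metis image_eqI vec_nth_inverse)
  qed
  then show ?thesis
    by (rule finite_subset) (intro finite_imageI finite_PiE; simp add: assms)
qed

lemma face_of_convex_hull_Int_supporting_hyperplane_ge:
  assumes "\<And>s. s \<in> S \<Longrightarrow> c \<le> u \<bullet> s"
  shows "convex hull S \<inter> {x. u \<bullet> x = c} face_of convex hull S"
proof (rule face_of_Int_supporting_hyperplane_ge)
  have "convex hull S \<subseteq> {x. c \<le> u \<bullet> x}"
    using assms by (intro hull_minimal convex_halfspace_ge) auto
  then show "\<And>x. x \<in> convex hull S \<Longrightarrow> c \<le> u \<bullet> x" by blast
qed simp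

lemma face_of_convex_hull_Int_supporting_hyperplane_le:
  assumes "\<And>s. s \<in> S \<Longrightarrow> u \<bullet> s \<le> c"
  shows "convex hull S \<inter> {x. u \<bullet> x = c} face_of convex hull S"
proof (rule face_of_Int_supporting_hyperplane_le)
  have "convex hull S \<subseteq> {x. u \<bullet> x \<le> c}"
    using assms by (intro hull_minimal convex_halfspace_le) auto
  then show "\<And>x. x \<in> convex hull S \<Longrightarrow> u \<bullet> x \<le> c" by blast
qed simp

lemma face_of_convex_hull_fix_01_coordinates:
  fixes S :: "(real^'n) set"
  assumes S01: "\<And>s i. s \<in> S \<Longrightarrow> i \<in> I \<Longrightarrow> s $ i \<in> {0, 1}"
    and c01: "\<And>i. i \<in> I \<Longrightarrow> c i \<in> {0, 1}"
  shows "convex hull S \<inter> {x. \<forall>i\<in>I. x $ i = c i} face_of convex hull S"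
proof (cases "I = {}")
  case True
  then show ?thesis by (simp add: face_of_refl)
next
  case False
  have coordinate_face: "convex hull S \<inter> {x. x $ i = c i} face_of convex hull S" if "i \<in> I" for i
  proof (cases "c i = 0")
    case True
    then show ?thesis
      using face_of_convex_hull_Int_supporting_hyperplane_ge[of S 0 "axis i 1"] S01 that
      by (force simp: inner_axis')
  next
    case False
    then have "c i = 1" using c01 that by blast
    then show ?thesis
      using face_of_convex_hull_Int_supporting_hyperplane_le[of S "axis i 1" 1] S01 that
      by (force simp: inner_axis')
  qed
  have "convex hull S \<inter> {x. \<forall>i\<in>I. x $ i = c i} =
      \<Inter> ((\<lambda>i. convex hull S \<inter> {x. x $ i = c i}) ` I)"
    using False by auto
  also have "\<dots> face_of convex hull S"
    using False coordinate_face by (intro face_of_Inter) auto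
  finally show ?thesis .
qed

lemma integer_coordinate_in_convex_hull_01:
  fixes S :: "(real^'n) set"
  assumes "x \<in> convex hull S" "x $ i \<in> \<int>" "\<And>s. s \<in> S \<Longrightarrow> s $ i \<in> {0, 1}"
  shows "x $ i \<in> {0, 1}"
proof -
  have "convex {x::real^'n. 0 \<le> x $ i \<and> x $ i \<le> 1}"
    using convex_Int[OF convex_halfspace_ge[of 0 "axis i (1::real)"]
        convex_halfspace_le[of "axis i (1::real)" 1]]
    by (simp add: inner_axis' Int_def)
  then have "convex hull S \<subseteq> {x. 0 \<le> x $ i \<and> x $ i \<le> 1}"
    using assms(3) by (intro hull_minimal) force+
  then have "0 \<le> x $ i" "x $ i \<le> 1" using assms(1) by auto
  moreover obtain m where "x $ i = of_int m"
    using \<open>x $ i \<in> \<int>\<close> by (auto elim: Ints_cases)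
  ultimately have "0 \<le> m" "m \<le> 1" by simp_all
  then have "m = 0 \<or> m = 1" by arith
  with \<open>x $ i = of_int m\<close> show ?thesis by auto
qed

lemma aff_dim_le_card_free_coordinates:
  fixes T :: "(real^'n) set"
  assumes same: "\<And>x y i. x \<in> T \<Longrightarrow> y \<in> T \<Longrightarrow> i \<notin> J \<Longrightarrow> x $ i = y $ i"
  shows "aff_dim T \<le> int (card J)"
proof (cases "T = {}")
  case False
  then obtain x0 where "x0 \<in> T" by blast
  define L where "L = {x::real^'n. \<forall>i. i \<notin> J \<longrightarrow> x $ i = 0}"
  have "y - x0 \<in> L" if "y \<in> T" for y
    using same[OF that \<open>x0 \<in> T\<close>] by (simp add: L_def)
  then have "aff_dim ((\<lambda>y. y - x0) ` T) \<le> aff_dim L"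
    by (intro aff_dim_subset) blast
  also have "aff_dim L = int (dim L)"
    using subspace_substandard_cart[where 'a = real and P = "\<lambda>i. i \<notin> J"] unfolding L_def
    by (intro aff_dim_subspace) (simp add: subspace_vec_eq)
  also have "dim L = card J"
    using dim_substandard_cart[where 'a = real and d = J] unfolding L_def by (simp add: dim_vec_eq)
  finally show ?thesis
    by (simp add: aff_dim_translation_eq_subtract)
qed simp

lemma convex_above_parabola: "convex {y::real^'n. (y $ a)\<^sup>2 \<le> y $ b}"
proof (rule convexI, simp)
  fix x y :: "real^'n" and u v :: real
  assume h: "(x $ a)\<^sup>2 \<le> x $ b" "(y $ a)\<^sup>2 \<le> y $ b" "0 \<le> u" "0 \<le> v" "u + v = 1"
  have v: "v = 1 - u"
    using \<open>u + v = 1\<close> by simp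
  have "(u * x $ a + v * y $ a)\<^sup>2 = u * (x $ a)\<^sup>2 + v * (y $ a)\<^sup>2 - u * v * (x $ a - y $ a)\<^sup>2"
    unfolding v by (simp add: power2_eq_square algebra_simps)
  also have "\<dots> \<le> u * (x $ a)\<^sup>2 + v * (y $ a)\<^sup>2"
    using h by simp
  also have "\<dots> \<le> u * x $ b + v * y $ b"
    using h by (simp add: add_mono mult_left_mono)
  finally show "(u * x $ a + v * y $ a)\<^sup>2 \<le> u * x $ b + v * y $ b" .
qed

lemma finite_parabola_prism: "finite (parabola_prism a b N)"
proof -
  define T where "T = real ` {..<N} \<union> (\<lambda>k. (real k)\<^sup>2) ` {..<N} \<union> {0, 1}"
  have "parabola_prism a b N \<subseteq> {x. \<forall>i. x $ i \<in> T}"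
    by (auto simp: parabola_prism_def T_def)
  then show ?thesis
    by (rule finite_subset) (rule finite_vectors_with_coordinates_in, simp add: T_def)
qed

lemma lattice_point_parabola_prism:
  assumes "x \<in> parabola_prism a b N"
  shows "lattice_point x"
proof -
  obtain k where xa: "x $ a = real k" and xb: "x $ b = (real k)\<^sup>2"
    and x01: "\<And>i. i \<notin> {a, b} \<Longrightarrow> x $ i \<in> {0, 1}"
    using assms by (auto simp: parabola_prism_def)
  have "x $ i \<in> \<int>" for i
    using xa xb x01[of i] by (cases "i \<in> {a, b}") auto
  then show ?thesis
    by (simp add: lattice_point_def)
qed

lemma parabola_prism_above_tangent:
  assumes "s \<in> parabola_prism a b N"
  shows "- (real k)\<^sup>2 \<le> s $ b - 2 * real k * s $ a"
proof -
  obtain j where "s $ a = real j" "s $ b = (real j)\<^sup>2"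
    using assms by (auto simp: parabola_prism_def)
  moreover have "0 \<le> (real j - real k)\<^sup>2" by simp
  ultimately show ?thesis
    by (simp add: power2_eq_square algebra_simps)
qed

lemma convex_hull_parabola_prism_above_parabola:
  assumes "y \<in> convex hull (parabola_prism a b N)"
  shows "(y $ a)\<^sup>2 \<le> y $ b"
proof -
  have "convex hull (parabola_prism a b N) \<subseteq> {y. (y $ a)\<^sup>2 \<le> y $ b}"
    by (intro hull_minimal convex_above_parabola) (auto simp: parabola_prism_def)
  with assms show ?thesis by blast
qed

lemma extreme_point_of_convex_hull_parabola_prism:
  fixes v :: "real^'n"
  assumes "v \<in> parabola_prism a b N"
  shows "v extreme_point_of convex hull (parabola_prism a b N)"
proof -
  define S where "S = parabola_prism a b N"
  obtain k where vk: "v $ a = real k" "v $ b = (real k)\<^sup>2"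
    and v01: "\<And>i. i \<notin> {a, b} \<Longrightarrow> v $ i \<in> {0, 1}"
    using assms by (auto simp: parabola_prism_def)
  define u :: "real^'n" where "u = axis b 1 - (2 * real k) *\<^sub>R axis a 1"
  have u: "u \<bullet> y = y $ b - 2 * real k * y $ a" for y
    by (simp add: u_def inner_diff_left inner_axis')
  define tangent where "tangent = convex hull S \<inter> {y. u \<bullet> y = - (real k)\<^sup>2}"
  define slice where "slice = convex hull S \<inter> {y. \<forall>i\<in>- {a, b}. y $ i = v $ i}"
  have "tangent face_of convex hull S"
    unfolding tangent_def
    by (rule face_of_convex_hull_Int_supporting_hyperplane_ge)
      (simp add: u S_def parabola_prism_above_tangent)
  moreover have "slice face_of convex hull S"
    unfolding slice_def
    by (rule face_of_convex_hull_fix_01_coordinates)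
      (use v01 in \<open>auto simp: S_def parabola_prism_def\<close>)
  moreover have "tangent \<inter> slice = {v}"
  proof (intro equalityI subsetI)
    fix y assume y: "y \<in> tangent \<inter> slice"
    then have "(y $ a)\<^sup>2 \<le> y $ b" and "y $ b = 2 * real k * y $ a - (real k)\<^sup>2"
      by (auto simp: tangent_def S_def u convex_hull_parabola_prism_above_parabola)
    then have "(y $ a - real k)\<^sup>2 \<le> 0"
      by (simp add: power2_eq_square algebra_simps)
    then have "y $ a = v $ a"
      using vk by simp
    moreover have "y $ b = v $ b"
      using \<open>y $ b = _\<close> calculation vk by (simp add: power2_eq_square)
    ultimately show "y \<in> {v}"
      using y by (auto simp: slice_def vec_eq_iff)
  next
    fix y assume "y \<in> {v}"
    then show "y \<in> tangent \<inter> slice"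
      using assms vk by (auto simp: tangent_def slice_def S_def u hull_inc power2_eq_square)
  qed
  ultimately show ?thesis
    by (metis face_of_Int face_of_singleton S_def)
qed

lemma card_parabola_prism_ge:
  fixes a b :: "'n::finite"
  assumes "a \<noteq> b"
  shows "N \<le> card (parabola_prism a b N)"
proof -
  define p :: "nat \<Rightarrow> real^'n" where "p k = real k *\<^sub>R axis a 1 + (real k)\<^sup>2 *\<^sub>R axis b 1" for k
  have "p k $ a = real k" for k
    using assms by (simp add: p_def axis_def)
  then have "inj_on p {..<N}"
    by (metis inj_onI of_nat_eq_iff)
  moreover have "p ` {..<N} \<subseteq> parabola_prism a b N"
    using assms by (auto simp: p_def parabola_prism_def axis_def)
  ultimately show ?thesis
    using card_inj_on_le[OF _ _ finite_parabola_prism] by fastforce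
qed

lemma span_parabola_prism:
  fixes a b :: "'n::finite"
  assumes "a \<noteq> b" "3 \<le> N"
  shows "span (parabola_prism a b N) = UNIV"
proof -
  define S where "S = parabola_prism a b N"
  have "axis a 1 + axis b 1 \<in> S" "axis a 2 + axis b 4 \<in> S"
    using assms by (auto simp: S_def parabola_prism_def axis_def intro!: exI[of _ 1] exI[of _ 2])
  then have one: "axis a 1 + axis b 1 \<in> span S" and two: "axis a 2 + axis b 4 \<in> span S"
    by (auto intro: span_base)
  have "axis b 1 = (1/2) *\<^sub>R ((axis a 2 + axis b 4) - 2 *\<^sub>R (axis a 1 + axis b 1) :: real^'n)"
    by (auto simp: vec_eq_iff axis_def)
  also have "\<dots> \<in> span S"
    using one two by (intro span_mul span_diff)
  finally have b: "axis b 1 \<in> span S" .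
  with one have "axis a 1 \<in> span S"
    by (metis add_diff_cancel_right' span_diff)
  moreover have "axis i 1 \<in> span S" if "i \<notin> {a, b}" for i
    using that assms
    by (intro span_base) (auto simp: S_def parabola_prism_def axis_def intro!: exI[of _ 0])
  ultimately have "axis i 1 \<in> span S" for i
    using b by (cases "i \<in> {a, b}") auto
  then have "Basis \<subseteq> span S"
    by (auto simp: Basis_vec_def)
  then show ?thesis
    unfolding S_def by (metis span_Basis span_minimal subspace_span top.extremum_uniqueI)
qed

lemma aff_dim_convex_hull_parabola_prism:
  fixes a b :: "'n::finite"
  assumes "a \<noteq> b" "3 \<le> N"
  shows "aff_dim (convex hull (parabola_prism a b N)) = int CARD('n)"
proof -
  define S where "S = parabola_prism a b N"
  have "0 \<in> affine hull S"
    using assms by (intro hull_inc) (auto simp: S_def parabola_prism_def)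
  then have "aff_dim S = int (dim S)"
    using aff_dim_eq_dim[of 0 S] by simp
  moreover have "dim S = DIM(real^'n)"
    using span_parabola_prism[OF assms] dim_eq_full[of S] by (simp add: S_def)
  ultimately show ?thesis
    by (simp add: S_def aff_dim_convex_hull)
qed

lemma lattice_point_in_face_of_convex_hull_parabola_prism:
  assumes x: "x \<in> convex hull (parabola_prism a b N)" and "lattice_point x"
  shows "\<exists>F. F face_of convex hull (parabola_prism a b N) \<and> aff_dim F \<le> 2 \<and> x \<in> F"
proof -
  define F where "F = convex hull (parabola_prism a b N) \<inter> {y. \<forall>i\<in>- {a, b}. y $ i = x $ i}"
  have x01: "x $ i \<in> {0, 1}" if "i \<notin> {a, b}" for i
  proof (rule integer_coordinate_in_convex_hull_01[OF x])
    show "x $ i \<in> \<int>"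
      using \<open>lattice_point x\<close> by (simp add: lattice_point_def)
    show "\<And>s. s \<in> parabola_prism a b N \<Longrightarrow> s $ i \<in> {0, 1}"
      using that by (simp add: parabola_prism_def)
  qed
  have "F face_of convex hull (parabola_prism a b N)"
    unfolding F_def
    by (rule face_of_convex_hull_fix_01_coordinates) (use x01 in \<open>auto simp: parabola_prism_def\<close>)
  moreover have "aff_dim F \<le> int (card {a, b})"
    by (rule aff_dim_le_card_free_coordinates) (simp add: F_def)
  moreover have "card {a, b} \<le> 2"
    by (simp add: card_insert_le_m1)
  moreover have "x \<in> F"
    using x by (simp add: F_def)
  ultimately show ?thesis
    by fastforce
qed

theorem theorem11:
  fixes n :: nat
  assumes "CARD('d) \<ge> 3" and "n > 0"
  shows "\<exists>V :: (real^'d) set. finite V \<and> (\<forall>v\<in>V. lattice_point v) \<and>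
           aff_dim (convex hull V) = int CARD('d) \<and>
           card {v. v extreme_point_of (convex hull V)} \<ge> n \<and>
           (\<forall>x \<in> convex hull V. lattice_point x \<longrightarrow>
              (\<exists>F. F face_of (convex hull V) \<and> aff_dim F \<le> 2 \<and> x \<in> F))"
proof -
  have "\<not> CARD('d) \<le> Suc 0"
    using assms(1) by simp
  then obtain a b :: 'd where "a \<noteq> b"
    by (auto simp: card_le_Suc0_iff_eq)
  define V where "V = parabola_prism a b (n + 3)"
  have "{v. v extreme_point_of convex hull V} = V"
    using extreme_point_of_convex_hull extreme_point_of_convex_hull_parabola_prism
    by (auto simp: V_def)
  moreover have "n \<le> card V"
    using card_parabola_prism_ge[OF \<open>a \<noteq> b\<close>, of "n + 3"] by (simp add: V_def)
  moreover have "aff_dim (convex hull V) = int CARD('d)"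
    using aff_dim_convex_hull_parabola_prism[OF \<open>a \<noteq> b\<close>, of "n + 3"] by (simp add: V_def)
  ultimately show ?thesis
    using finite_parabola_prism lattice_point_parabola_prism
      lattice_point_in_face_of_convex_hull_parabola_prism
    by (intro exI[of _ V]) (auto simp: V_def)
qed

end
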